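(* Let $\mathbb{A}\in\mathbb{C}^{n\times n}$, $\mathbf{f}_1\in\mathbb{C}^n$, $\mathbf{f}_{i+1}=\mathbb{A}\mathbf{f}_i$ for $i=1,\dots,m$, and assume $\mathbf{X}_m=(\mathbf{f}_1,\dots,\mathbf{f}_m)$ has full column rank. Let $C_m$ be the companion matrix (ones on the first subdiagonal, last column $\mathbf{X}_m^\dagger\mathbf{f}_{m+1}$, zeros elsewhere), assume its eigenvalues $\lambda_1,\dots,\lambda_m$ are pairwise distinct, and let $\mathbb{V}_m=(\lambda_i^{j-1})_{i,j=1}^m$. Let $\mathbf{X}_m=U_m\Sigma_m\Phi_m^*$ be a thin SVD ($U_m\in\mathbb{C}^{n\times m}$ with orthonormal columns, $\Sigma_m$ positive diagonal, $\Phi_m$ unitary), let $S_m=U_m^*\mathbb{A}U_m$, and let $B_m=(b_1,\dots,b_m)$ with $S_mb_j=\lambda_jb_j$, $\|b_j\|_2=1$; set $Z_m=U_mB_m$. Then for each $j=1,\dots,m$, $$\mathfrak{a}_j:=\|\mathbf{X}_m\mathbb{V}_m^{-1}\mathbf{e}_j\|_2=\big|(Z_m^\dagger\mathbf{X}_m(:,1))_j\big|,$$ where $\mathbf{e}_j$ is the $j$-th canonical basis vector and $\mathbf{X}_m(:,1)=\mathbf{f}_1$.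
   Context: $\mathbf{X}_m^\dagger$, $Z_m^\dagger$ denote Moore–Penrose pseudoinverses. The matrix $Z_m$ is the matrix of DMD (Ritz) vectors produced by Schmid's DMD without truncation; $S_m$ equals $U_m^*(\mathbb{A}\mathbf{X}_m)\Phi_m\Sigma_m^{-1}$. *)

theory Defs
  imports Complex_Main "Jordan_Normal_Form.Schur_Decomposition" "Jordan_Normal_Form.DL_Rank"
          "Jordan_Normal_Form.Char_Poly"
begin

definition vnorm2 :: "complex vec \<Rightarrow> real" where
  "vnorm2 v = sqrt (\<Sum>i<dim_vec v. (cmod (v $ i))^2)"

definition penrose :: "complex mat \<Rightarrow> complex mat \<Rightarrow> bool" where
  "penrose A P \<longleftrightarrow> P \<in> carrier_mat (dim_col A) (dim_row A) \<and>
     A * P * A = A \<and> P * A * P = P \<and>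
     mat_adjoint (A * P) = A * P \<and> mat_adjoint (P * A) = P * A"

definition pinv :: "complex mat \<Rightarrow> complex mat" where
  "pinv A = (THE P. penrose A P)"

definition mat_inv :: "complex mat \<Rightarrow> complex mat" where
  "mat_inv A = (THE B. B \<in> carrier_mat (dim_row A) (dim_row A) \<and> inverts_mat A B \<and> inverts_mat B A)"

definition companion :: "nat \<Rightarrow> complex vec \<Rightarrow> complex mat" where
  "companion m c = mat m m (\<lambda>(i,j). if j = m - 1 then c $ i else if i = j + 1 then 1 else 0)"

text \<open>Vandermonde matrix (lambda_i^(j-1)), 0-indexed.\<close>
definition vandermonde :: "nat \<Rightarrow> (nat \<Rightarrow> complex) \<Rightarrow> complex mat" where
  "vandermonde m lam = mat m m (\<lambda>(i,j). lam i ^ j)"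

end

theory Submission
  imports Defs
begin

text \<open>Let \<open>P = \<Phi> \<Sigma>\<^sup>-\<^sup>1 U\<^sup>*\<close>. It is a left inverse of \<open>X\<close> with \<open>X P = U U\<^sup>*\<close> Hermitian, so
  \<open>P = X\<^sup>\<dagger>\<close>, and since the columns of \<open>X\<close> form a Krylov sequence, \<open>C = P A X\<close>. Because
  \<open>P = P U U\<^sup>*\<close>, the vector \<open>P U b\<^sub>j\<close> is an eigenvector of \<open>C\<close> for \<open>\<lambda>\<^sub>j\<close>. The rows of the
  Vandermonde matrix \<open>V\<close> are left eigenvectors of \<open>C\<close>, so for distinct eigenvalues
  \<open>P U b\<^sub>j = \<beta>\<^sub>j V\<^sup>-\<^sup>1 e\<^sub>j\<close>, and applying \<open>X\<close> gives \<open>Z e\<^sub>j = U b\<^sub>j = \<beta>\<^sub>j X V\<^sup>-\<^sup>1 e\<^sub>j\<close>. Hence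
  \<open>|\<beta>\<^sub>j| \<parallel>X V\<^sup>-\<^sup>1 e\<^sub>j\<parallel> = \<parallel>b\<^sub>j\<parallel> = 1\<close>, and from \<open>Z = X V\<^sup>-\<^sup>1 diag(\<beta>)\<close> we get
  \<open>Z\<^sup>\<dagger> = diag(1/\<beta>) V X\<^sup>\<dagger>\<close>, which maps \<open>f\<^sub>1 = X e\<^sub>1\<close> to \<open>diag(1/\<beta>) V e\<^sub>1 = (1/\<beta>\<^sub>j)\<^sub>j\<close>.\<close>

section \<open>Adjoints and the Moore--Penrose pseudoinverse\<close>

lemma mat_adjoint_carrier [simp]: "A \<in> carrier_mat n m \<Longrightarrow> mat_adjoint A \<in> carrier_mat m n"
  unfolding mat_adjoint_def by auto

lemma dim_mat_adjoint [simp]: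
  "dim_row (mat_adjoint A) = dim_col A" "dim_col (mat_adjoint A) = dim_row A"
  unfolding mat_adjoint_def by auto

lemma index_mat_adjoint [simp]:
  "i < dim_col A \<Longrightarrow> j < dim_row A \<Longrightarrow> mat_adjoint A $$ (i, j) = cnj (A $$ (j, i))"
  unfolding mat_adjoint_def by (simp add: mat_of_rows_index)

lemma mat_adjoint_adjoint [simp]: "mat_adjoint (mat_adjoint (A :: complex mat)) = A"
  by (rule eq_matI) auto

lemma mat_adjoint_one [simp]: "mat_adjoint (1\<^sub>m n :: complex mat) = 1\<^sub>m n"
  by (rule eq_matI) auto

lemma mat_adjoint_mult:
  assumes "(A :: complex mat) \<in> carrier_mat n k" "B \<in> carrier_mat k m"
  shows "mat_adjoint (A * B) = mat_adjoint B * mat_adjoint A"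
  using assms by (intro eq_matI) (auto simp: scalar_prod_def mult.commute)

lemma hermitian_mult_mat_adjoint:
  assumes "(U :: complex mat) \<in> carrier_mat n m"
  shows "mat_adjoint (U * mat_adjoint U) = U * mat_adjoint U"
  using mat_adjoint_mult[OF assms mat_adjoint_carrier[OF assms]] by simp

lemma inner_mult_mat_vec_adjoint:
  assumes U: "(U :: complex mat) \<in> carrier_mat n m" and x: "x \<in> carrier_vec m" and y: "y \<in> carrier_vec n"
  shows "(U *\<^sub>v x) \<bullet>c y = x \<bullet>c (mat_adjoint U *\<^sub>v y)"
proof -
  have "(U *\<^sub>v x) \<bullet>c y = (\<Sum>i<n. (\<Sum>k<m. U $$ (i, k) * x $ k) * cnj (y $ i))"
    using U x y unfolding scalar_prod_def mult_mat_vec_def by (simp add: atLeast0LessThan row_def)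
  also have "\<dots> = (\<Sum>k<m. x $ k * (\<Sum>i<n. U $$ (i, k) * cnj (y $ i)))"
    by (simp add: sum_distrib_left sum_distrib_right sum.swap[of _ "{..<n}"] mult_ac)
  also have "\<dots> = x \<bullet>c (mat_adjoint U *\<^sub>v y)"
    using U x y unfolding scalar_prod_def mult_mat_vec_def by (simp add: atLeast0LessThan row_def mult_ac)
  finally show ?thesis .
qed

lemma pinv_eq_left_inverse:
  assumes Z: "Z \<in> carrier_mat n m" and Q: "Q \<in> carrier_mat m n"
    and QZ: "Q * Z = 1\<^sub>m m" and herm: "mat_adjoint (Z * Q) = Z * Q"
  shows "pinv Z = Q"
  unfolding pinv_def
proof (rule the_equality)
  show "penrose Z Q"
    using Z Q QZ herm assoc_mult_mat[OF Z Q Z] by (simp add: penrose_def)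
next
  fix P assume "penrose Z P"
  then have P: "P \<in> carrier_mat m n" and ZPZ: "Z * P * Z = Z" and PZP: "P * Z * P = P"
    and hermP: "mat_adjoint (Z * P) = Z * P"
    using Z unfolding penrose_def by auto
  have PZ: "P * Z = 1\<^sub>m m"
  proof -
    have "P * Z = (Q * Z) * (P * Z)" using QZ P Z by simp
    also have "\<dots> = Q * (Z * P * Z)"
      using assoc_mult_mat[OF Q Z mult_carrier_mat[OF P Z]] assoc_mult_mat[OF Z P Z] by simp
    finally show ?thesis using ZPZ QZ by simp
  qed
  have ZP: "Z * P = Z * Q"
  proof -
    have ZQ: "Z * Q \<in> carrier_mat n n" and ZP: "Z * P \<in> carrier_mat n n" using Z P Q by auto
    have "Z * P = Z * (Q * Z) * P" using QZ Z by simp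
    also have "\<dots> = (Z * Q) * (Z * P)"
      using assoc_mult_mat[OF Z Q Z] assoc_mult_mat[OF ZQ Z P] by simp
    finally have "Z * P = mat_adjoint ((Z * Q) * (Z * P))" using hermP by simp
    also have "\<dots> = Z * P * (Z * Q)" using mat_adjoint_mult[OF ZQ ZP] hermP herm by simp
    also have "\<dots> = Z * (P * Z) * Q"
      using assoc_mult_mat[OF Z P mult_carrier_mat[OF Z Q]] assoc_mult_mat[OF P Z Q]
        assoc_mult_mat[OF Z mult_carrier_mat[OF P Z] Q] by simp
    finally show ?thesis using PZ Z by simp
  qed
  have "P = P * (Z * Q)" using PZP ZP assoc_mult_mat[OF P Z P] by simp
  also have "\<dots> = Q" using assoc_mult_mat[OF P Z Q] PZ Q by simp
  finally show "P = Q" .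
qed

lemma pinv_mult_invertible:
  assumes X: "X \<in> carrier_mat n m" and P: "P \<in> carrier_mat m n"
    and PX: "P * X = 1\<^sub>m m" and herm: "mat_adjoint (X * P) = X * P"
    and M: "M \<in> carrier_mat m m" and N: "N \<in> carrier_mat m m"
    and MN: "M * N = 1\<^sub>m m" and NM: "N * M = 1\<^sub>m m"
  shows "pinv (X * M) = N * P"
proof (rule pinv_eq_left_inverse)
  have "N * P * (X * M) = N * ((P * X) * M)"
    using assoc_mult_mat[OF N P mult_carrier_mat[OF X M]] assoc_mult_mat[OF P X M] by simp
  then show "N * P * (X * M) = 1\<^sub>m m" using PX NM M by simp
  have "X * M * (N * P) = X * ((M * N) * P)"
    using assoc_mult_mat[OF X M mult_carrier_mat[OF N P]] assoc_mult_mat[OF M N P] by simp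
  then show "mat_adjoint (X * M * (N * P)) = X * M * (N * P)" using MN P herm by simp
qed (use X M N P in auto)

section \<open>Euclidean norm\<close>

lemma vnorm2_nonneg: "vnorm2 v \<ge> 0"
  unfolding vnorm2_def by (auto intro: sum_nonneg)

lemma of_real_vnorm2_square: "complex_of_real (vnorm2 v ^ 2) = v \<bullet>c v"
proof -
  have "complex_of_real (vnorm2 v ^ 2) = (\<Sum>i<dim_vec v. complex_of_real ((cmod (v $ i))\<^sup>2))"
    unfolding vnorm2_def by (simp add: sum_nonneg)
  also have "\<dots> = (\<Sum>i<dim_vec v. v $ i * cnj (v $ i))"
    by (intro sum.cong refl) (rule complex_norm_square)
  also have "\<dots> = v \<bullet>c v"
    unfolding scalar_prod_def by (simp add: atLeast0LessThan)
  finally show ?thesis .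
qed

lemma vnorm2_eqI: "v \<bullet>c v = w \<bullet>c w \<Longrightarrow> vnorm2 v = vnorm2 w"
  by (metis of_real_vnorm2_square of_real_eq_iff power2_eq_iff_nonneg vnorm2_nonneg)

lemma vnorm2_mult_isometry:
  assumes U: "U \<in> carrier_mat n m" "mat_adjoint U * U = 1\<^sub>m m" and x: "x \<in> carrier_vec m"
  shows "vnorm2 (U *\<^sub>v x) = vnorm2 x"
proof (rule vnorm2_eqI)
  have "(U *\<^sub>v x) \<bullet>c (U *\<^sub>v x) = x \<bullet>c ((mat_adjoint U * U) *\<^sub>v x)"
    using inner_mult_mat_vec_adjoint[OF U(1) x, of "U *\<^sub>v x"]
      assoc_mult_mat_vec[OF mat_adjoint_carrier[OF U(1)] U(1) x] U(1) x by simp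
  then show "(U *\<^sub>v x) \<bullet>c (U *\<^sub>v x) = x \<bullet>c x" using U(2) x by simp
qed

lemma vnorm2_smult: "vnorm2 (c \<cdot>\<^sub>v v) = cmod c * vnorm2 v"
  unfolding vnorm2_def
  by (simp add: norm_mult power_mult_distrib sum_distrib_left[symmetric] real_sqrt_mult)

section \<open>Vandermonde and companion matrices\<close>

lemma mult_unit_vec_eq_col:
  "(A :: 'a :: semiring_1 mat) \<in> carrier_mat n m \<Longrightarrow> j < m \<Longrightarrow> A *\<^sub>v unit_vec m j = col A j"
  by (intro eq_vecI) auto

lemma mat_inv_eqI:
  assumes V: "V \<in> carrier_mat m m" and Y: "Y \<in> carrier_mat m m"
    and VY: "V * Y = 1\<^sub>m m" and YV: "Y * V = 1\<^sub>m m"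
  shows "mat_inv V = Y"
  unfolding mat_inv_def
proof (rule the_equality)
  show "Y \<in> carrier_mat (dim_row V) (dim_row V) \<and> inverts_mat V Y \<and> inverts_mat Y V"
    using V Y VY YV unfolding inverts_mat_def by auto
next
  fix B assume "B \<in> carrier_mat (dim_row V) (dim_row V) \<and> inverts_mat V B \<and> inverts_mat B V"
  then have B: "B \<in> carrier_mat m m" and BV: "B * V = 1\<^sub>m m"
    using V unfolding inverts_mat_def by auto
  have "B = B * (V * Y)" using VY B by simp
  also have "\<dots> = Y" using assoc_mult_mat[OF B V Y] BV Y by simp
  finally show "B = Y" .
qed

lemma vandermonde_carrier [simp]: "vandermonde m lam \<in> carrier_mat m m"
  unfolding vandermonde_def by simp

lemma vandermonde_mult_vec:
  "i < m \<Longrightarrow> x \<in> carrier_vec m \<Longrightarrow> (vandermonde m lam *\<^sub>v x) $ i = (\<Sum>k<m. lam i ^ k * x $ k)"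
  unfolding vandermonde_def mult_mat_vec_def scalar_prod_def
  by (simp add: atLeast0LessThan row_def)

text \<open>A nonzero kernel vector would give a polynomial of degree below \<open>m\<close> with \<open>m\<close> distinct roots.\<close>
lemma vandermonde_mult_vec_eq_0:
  assumes inj: "inj_on lam {..<m}" and w: "w \<in> carrier_vec m"
    and Vw: "vandermonde m lam *\<^sub>v w = 0\<^sub>v m"
  shows "w = 0\<^sub>v m"
proof -
  define p where "p = (\<Sum>k<m. monom (w $ k) k)"
  have coeff_p: "coeff p i = (if i < m then w $ i else 0)" for i
    unfolding p_def by (simp add: coeff_sum coeff_monom)
  have roots: "poly p (lam i) = 0" if "i < m" for i
    using arg_cong[OF Vw, of "\<lambda>u. u $ i"] vandermonde_mult_vec[OF that w] that
    by (simp add: p_def poly_sum poly_monom mult.commute)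
  have "p = 0"
  proof (rule ccontr)
    assume p0: "p \<noteq> 0"
    then have "m > 0" unfolding p_def by (cases m) auto
    have "degree p \<le> m - 1" by (rule degree_le) (use coeff_p in auto)
    then have "degree p < m" using \<open>m > 0\<close> by simp
    have "m = card (lam ` {..<m})" using card_image[OF inj] by simp
    also have "\<dots> \<le> card {x. poly p x = 0}"
      using roots poly_roots_finite[OF p0] by (intro card_mono) auto
    also have "\<dots> \<le> degree p" by (rule card_poly_roots_bound[OF p0])
    finally show False using \<open>degree p < m\<close> by simp
  qed
  then have "w $ i = 0" if "i < m" for i using coeff_p[of i] that by simp
  then show ?thesis using w by (intro eq_vecI) auto
qed

lemma vandermonde_invertible:
  assumes "inj_on lam {..<m}"
  obtains Y where "Y \<in> carrier_mat m m" "vandermonde m lam * Y = 1\<^sub>m m" "Y * vandermonde m lam = 1\<^sub>m m"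
proof -
  have "det (vandermonde m lam) \<noteq> 0"
    using det_0_iff_vec_prod_zero[OF vandermonde_carrier] vandermonde_mult_vec_eq_0[OF assms] by blast
  from det_non_zero_imp_unit[OF vandermonde_carrier this, of "()"]
  show ?thesis using that unfolding Units_def ring_mat_def by auto
qed

lemma companion_carrier [simp]: "companion m c \<in> carrier_mat m m"
  unfolding companion_def by simp

lemma companion_mult_vec:
  assumes i: "i < Suc m" and x: "x \<in> carrier_vec (Suc m)"
  shows "(companion (Suc m) c *\<^sub>v x) $ i = c $ i * x $ m + (if i = 0 then 0 else x $ (i - 1))"
proof -
  have "(companion (Suc m) c *\<^sub>v x) $ i
      = (\<Sum>k<Suc m. (if k = m then c $ i else if i = k + 1 then 1 else 0) * x $ k)"
    using i x unfolding companion_def mult_mat_vec_def scalar_prod_def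
    by (simp add: atLeast0LessThan row_def)
  also have "\<dots> = (\<Sum>k<m. (if k = i - 1 \<and> i \<noteq> 0 then x $ k else 0)) + c $ i * x $ m"
    by (simp add: sum.lessThan_Suc, intro sum.cong refl) auto
  also have "(\<Sum>k<m. (if k = i - 1 \<and> i \<noteq> 0 then x $ k else 0)) = (if i = 0 then 0 else x $ (i - 1))"
    using i by (cases "i = 0") auto
  finally show ?thesis by simp
qed

text \<open>Pairing with \<open>(1, l, \<dots>, l\<^sup>m)\<close>: the companion matrix acts as multiplication by \<open>l\<close>
  up to a multiple of its characteristic polynomial at \<open>l\<close>.\<close>
lemma sum_powers_companion_mult_vec:
  assumes x: "x \<in> carrier_vec (Suc m)"
  shows "(\<Sum>k<Suc m. l ^ k * (companion (Suc m) c *\<^sub>v x) $ k)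
    = l * (\<Sum>k<Suc m. l ^ k * x $ k) + ((\<Sum>k<Suc m. c $ k * l ^ k) - l ^ Suc m) * x $ m"
proof -
  have "(\<Sum>k<Suc m. l ^ k * (companion (Suc m) c *\<^sub>v x) $ k)
      = (\<Sum>k<Suc m. l ^ k * (c $ k * x $ m + (if k = 0 then 0 else x $ (k - 1))))"
    using x by (intro sum.cong refl) (simp add: companion_mult_vec)
  also have "\<dots> = (\<Sum>k<Suc m. c $ k * l ^ k) * x $ m
      + (\<Sum>k<Suc m. l ^ k * (if k = 0 then 0 else x $ (k - 1)))"
    by (simp add: distrib_left sum.distrib sum_distrib_left sum_distrib_right mult_ac)
  also have "(\<Sum>k<Suc m. l ^ k * (if k = 0 then 0 else x $ (k - 1))) = (\<Sum>k<m. l ^ Suc k * x $ k)"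
    by (simp only: sum.lessThan_Suc_shift) simp
  finally show ?thesis by (simp add: sum_distrib_left distrib_left algebra_simps)
qed

lemma companion_eigenvector_last_nonzero:
  assumes v: "v \<in> carrier_vec (Suc m)" "v \<noteq> 0\<^sub>v (Suc m)"
    and ev: "companion (Suc m) c *\<^sub>v v = l \<cdot>\<^sub>v v"
  shows "v $ m \<noteq> 0"
proof
  assume last: "v $ m = 0"
  have shift: "v $ (i - 1) = l * v $ i" if "i < Suc m" "i \<noteq> 0" for i
    using arg_cong[OF ev, of "\<lambda>u. u $ i"] companion_mult_vec[OF that(1) v(1)] last that v(1) by simp
  have vanish: "v $ (m - d) = 0" if "d \<le> m" for d
    using that
  proof (induction d)
    case (Suc d)
    then have "v $ (m - Suc d) = l * v $ (m - d)"
      using shift[of "m - d"] by simp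
    then show ?case using Suc by simp
  qed (use last in simp)
  have "v $ i = 0" if "i < Suc m" for i using vanish[of "m - i"] that by simp
  then have "v = 0\<^sub>v (Suc m)" using v(1) by (intro eq_vecI) auto
  then show False using v(2) by contradiction
qed

lemma companion_eigenvalue_root:
  assumes "eigenvalue (companion (Suc m) c) l"
  shows "(\<Sum>k<Suc m. c $ k * l ^ k) = l ^ Suc m"
proof -
  obtain v where v: "v \<in> carrier_vec (Suc m)" "v \<noteq> 0\<^sub>v (Suc m)"
    and ev: "companion (Suc m) c *\<^sub>v v = l \<cdot>\<^sub>v v"
    using assms carrier_matD[OF companion_carrier[of "Suc m" c]]
    unfolding eigenvalue_def eigenvector_def by auto
  have "(\<Sum>k<Suc m. l ^ k * (companion (Suc m) c *\<^sub>v v) $ k) = l * (\<Sum>k<Suc m. l ^ k * v $ k)"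
    using v(1) unfolding ev by (simp add: sum_distrib_left distrib_left mult_ac)
  then have "((\<Sum>k<Suc m. c $ k * l ^ k) - l ^ Suc m) * v $ m = 0"
    using sum_powers_companion_mult_vec[OF v(1), of l c] by simp
  then show ?thesis using companion_eigenvector_last_nonzero[OF v ev] by simp
qed

lemma vandermonde_mult_companion:
  assumes "eigenvalue (companion (Suc m) c) (lam i)" and i: "i < Suc m" and x: "x \<in> carrier_vec (Suc m)"
  shows "(vandermonde (Suc m) lam *\<^sub>v (companion (Suc m) c *\<^sub>v x)) $ i
       = lam i * (vandermonde (Suc m) lam *\<^sub>v x) $ i"
  using sum_powers_companion_mult_vec[OF x, of "lam i" c] companion_eigenvalue_root[OF assms(1)]
    vandermonde_mult_vec[OF i x] vandermonde_mult_vec[OF i mult_mat_vec_carrier[OF companion_carrier x]]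
  by simp

lemma companion_eigenvector_eq_col_inverse_vandermonde:
  assumes eig: "\<And>i. i < m \<Longrightarrow> eigenvalue (companion m c) (lam i)"
    and inj: "inj_on lam {..<m}"
    and Y: "Y \<in> carrier_mat m m" "Y * vandermonde m lam = 1\<^sub>m m"
    and j: "j < m" and v: "v \<in> carrier_vec m" and ev: "companion m c *\<^sub>v v = lam j \<cdot>\<^sub>v v"
  shows "v = (vandermonde m lam *\<^sub>v v) $ j \<cdot>\<^sub>v col Y j"
proof -
  obtain m' where m: "m = Suc m'" using j by (cases m) auto
  define w where "w = vandermonde m lam *\<^sub>v v"
  have w: "w \<in> carrier_vec m" unfolding w_def using mult_mat_vec_carrier[OF vandermonde_carrier v] .
  have "w $ i = 0" if i: "i < m" "i \<noteq> j" for i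
  proof -
    have "lam i * w $ i = (vandermonde m lam *\<^sub>v (companion m c *\<^sub>v v)) $ i"
      using vandermonde_mult_companion[of m' c lam i v] eig[OF i(1)] i(1) v unfolding w_def m by simp
    also have "\<dots> = (lam j \<cdot>\<^sub>v w) $ i"
      unfolding ev w_def using mult_mat_vec[OF vandermonde_carrier v] by simp
    also have "\<dots> = lam j * w $ i" using w i(1) by simp
    moreover have "lam i \<noteq> lam j" using inj i j unfolding inj_on_def by auto
    ultimately show ?thesis by simp
  qed
  then have w_unit: "w = w $ j \<cdot>\<^sub>v unit_vec m j" using w j by (intro eq_vecI) auto
  have "v = (Y * vandermonde m lam) *\<^sub>v v" using Y(2) v by simp
  also have "\<dots> = Y *\<^sub>v (w $ j \<cdot>\<^sub>v unit_vec m j)"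
    using assoc_mult_mat_vec[OF Y(1) vandermonde_carrier v] w_unit unfolding w_def by simp
  also have "\<dots> = w $ j \<cdot>\<^sub>v col Y j" using Y(1) j by (simp add: mult_mat_vec mult_unit_vec_eq_col)
  finally show ?thesis unfolding w_def .
qed

section \<open>Krylov matrices, thin SVD and Ritz vectors\<close>

lemma krylov_carrier:
  assumes A: "A \<in> carrier_mat n n" and f0: "f 0 \<in> carrier_vec n"
    and fS: "\<And>i. i < m \<Longrightarrow> f (Suc i) = A *\<^sub>v f i"
  shows "j \<le> m \<Longrightarrow> f j \<in> carrier_vec n"
proof (induction j)
  case (Suc j)
  then show ?case using fS[of j] A by simp
qed (use f0 in simp)

lemma companion_krylov:
  assumes A: "A \<in> carrier_mat n n" and f0: "f 0 \<in> carrier_vec n"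
    and fS: "\<And>i. i < m \<Longrightarrow> f (Suc i) = A *\<^sub>v f i"
    and P: "P \<in> carrier_mat m n" and PX: "P * mat_of_cols n (map f [0..<m]) = 1\<^sub>m m"
  shows "companion m (P *\<^sub>v f m) = P * A * mat_of_cols n (map f [0..<m])"
proof -
  let ?X = "mat_of_cols n (map f [0..<m])"
  have X: "?X \<in> carrier_mat n m" by auto
  have f: "f j \<in> carrier_vec n" if "j \<le> m" for j using krylov_carrier[of A n f, OF A f0 fS that] .
  have colX: "col ?X j = f j" if "j < m" for j using that f by simp
  have Pf: "P *\<^sub>v f j = unit_vec m j" if "j < m" for j
    using col_mult2[OF P X that] PX colX[OF that] that by simp
  show ?thesis
  proof (rule mat_col_eqI)
    fix j assume "j < dim_col (P * A * ?X)"
    then have j: "j < m" by simp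
    have "col (P * A * ?X) j = P *\<^sub>v f (Suc j)"
      using col_mult2[OF mult_carrier_mat[OF P A] X j] colX[OF j] f[of j] j P A fS[OF j] by simp
    then show "col (companion m (P *\<^sub>v f m)) j = col (P * A * ?X) j"
      using j P Pf[of "Suc j"] by (cases "Suc j = m") (auto intro!: eq_vecI simp: companion_def)
  qed (use P A in \<open>auto simp: companion_def\<close>)
qed

lemma diagonal_mat_inverse:
  assumes D: "(D :: 'a :: field mat) \<in> carrier_mat m m" "diagonal_mat D" "\<And>i. i < m \<Longrightarrow> D $$ (i, i) \<noteq> 0"
  shows "D * mat_diag m (\<lambda>i. 1 / D $$ (i, i)) = 1\<^sub>m m"
    and "mat_diag m (\<lambda>i. 1 / D $$ (i, i)) * D = 1\<^sub>m m"
  unfolding mat_diag_mult_left[OF D(1)] mat_diag_mult_right[OF D(1)]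
  using D carrier_matD[OF D(1)] by (auto intro!: eq_matI simp: diagonal_mat_def)

lemma isometry_mult_invertible_left_inverse:
  assumes U: "U \<in> carrier_mat n m" "mat_adjoint U * U = 1\<^sub>m m"
    and W: "W \<in> carrier_mat m m" and Winv: "Winv \<in> carrier_mat m m"
    and WWinv: "W * Winv = 1\<^sub>m m" and WinvW: "Winv * W = 1\<^sub>m m"
  shows "Winv * mat_adjoint U * (U * W) = 1\<^sub>m m"
    and "U * W * (Winv * mat_adjoint U) = U * mat_adjoint U"
proof -
  have Uh: "mat_adjoint U \<in> carrier_mat m n" using U(1) by simp
  have "Winv * mat_adjoint U * (U * W) = Winv * ((mat_adjoint U * U) * W)"
    using assoc_mult_mat[OF Winv Uh mult_carrier_mat[OF U(1) W]] assoc_mult_mat[OF Uh U(1) W] by simp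
  then show "Winv * mat_adjoint U * (U * W) = 1\<^sub>m m" using U(2) W WinvW by simp
  have "U * W * (Winv * mat_adjoint U) = U * ((W * Winv) * mat_adjoint U)"
    using assoc_mult_mat[OF U(1) W mult_carrier_mat[OF Winv Uh]] assoc_mult_mat[OF W Winv Uh] by simp
  then show "U * W * (Winv * mat_adjoint U) = U * mat_adjoint U"
    using WWinv left_mult_one_mat[OF Uh] by simp
qed

lemma thin_svd_left_inverse:
  assumes U: "U \<in> carrier_mat n m" "mat_adjoint U * U = 1\<^sub>m m"
    and Sig: "Sig \<in> carrier_mat m m" "diagonal_mat Sig" "\<And>i. i < m \<Longrightarrow> Sig $$ (i, i) \<noteq> 0"
    and Phi: "Phi \<in> carrier_mat m m" "mat_adjoint Phi * Phi = 1\<^sub>m m" "Phi * mat_adjoint Phi = 1\<^sub>m m"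
  defines "P \<equiv> Phi * mat_diag m (\<lambda>i. 1 / Sig $$ (i, i)) * mat_adjoint U"
  shows "P \<in> carrier_mat m n"
    and "P * (U * Sig * mat_adjoint Phi) = 1\<^sub>m m"
    and "U * Sig * mat_adjoint Phi * P = U * mat_adjoint U"
proof -
  define Sinv where "Sinv = mat_diag m (\<lambda>i. 1 / Sig $$ (i, i))"
  define W where "W = Sig * mat_adjoint Phi"
  define Winv where "Winv = Phi * Sinv"
  note SigSinv = diagonal_mat_inverse[OF Sig, folded Sinv_def]
  have Sinv: "Sinv \<in> carrier_mat m m" unfolding Sinv_def by simp
  have Phih: "mat_adjoint Phi \<in> carrier_mat m m" using Phi(1) by simp
  have W: "W \<in> carrier_mat m m" and Winv: "Winv \<in> carrier_mat m m"
    unfolding W_def Winv_def using Sig(1) Phi(1) Sinv by auto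
  have "W * Winv = Sig * ((mat_adjoint Phi * Phi) * Sinv)"
    unfolding W_def Winv_def
    using assoc_mult_mat[OF Sig(1) Phih mult_carrier_mat[OF Phi(1) Sinv]]
      assoc_mult_mat[OF Phih Phi(1) Sinv] by simp
  then have WWinv: "W * Winv = 1\<^sub>m m" using Phi(2) Sinv SigSinv(1) by simp
  have "Winv * W = Phi * ((Sinv * Sig) * mat_adjoint Phi)"
    unfolding W_def Winv_def
    using assoc_mult_mat[OF Phi(1) Sinv mult_carrier_mat[OF Sig(1) Phih]]
      assoc_mult_mat[OF Sinv Sig(1) Phih] by simp
  then have WinvW: "Winv * W = 1\<^sub>m m" using Phi(3) left_mult_one_mat[OF Phih] SigSinv(2) by simp
  have X: "U * Sig * mat_adjoint Phi = U * W"
    unfolding W_def using assoc_mult_mat[OF U(1) Sig(1) Phih] .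
  have P_eq: "P = Winv * mat_adjoint U" unfolding P_def Winv_def Sinv_def ..
  show "P \<in> carrier_mat m n" unfolding P_eq using Winv U(1) by simp
  show "P * (U * Sig * mat_adjoint Phi) = 1\<^sub>m m" "U * Sig * mat_adjoint Phi * P = U * mat_adjoint U"
    unfolding P_eq X by (rule isometry_mult_invertible_left_inverse[OF U W Winv WWinv WinvW])+
qed

text \<open>The key identity is \<open>P = P X P = P U U\<^sup>*\<close>.\<close>
lemma compression_eigenvector:
  assumes X: "X \<in> carrier_mat n m" and P: "P \<in> carrier_mat m n" and A: "A \<in> carrier_mat n n"
    and U: "U \<in> carrier_mat n m" "mat_adjoint U * U = 1\<^sub>m m"
    and PX: "P * X = 1\<^sub>m m" and XP: "X * P = U * mat_adjoint U"
    and b: "b \<in> carrier_vec m" and eig: "(mat_adjoint U * A * U) *\<^sub>v b = l \<cdot>\<^sub>v b"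
  shows "X *\<^sub>v (P *\<^sub>v (U *\<^sub>v b)) = U *\<^sub>v b"
    and "(P * A * X) *\<^sub>v (P *\<^sub>v (U *\<^sub>v b)) = l \<cdot>\<^sub>v (P *\<^sub>v (U *\<^sub>v b))"
proof -
  have Uh: "mat_adjoint U \<in> carrier_mat m n" using U(1) by simp
  have Ub: "U *\<^sub>v b \<in> carrier_vec n" using U(1) b by simp
  have proj_U: "U *\<^sub>v (mat_adjoint U *\<^sub>v (U *\<^sub>v b)) = U *\<^sub>v b"
    using assoc_mult_mat_vec[OF Uh U(1) b] U(2) b by simp
  show XPUb: "X *\<^sub>v (P *\<^sub>v (U *\<^sub>v b)) = U *\<^sub>v b"
    using assoc_mult_mat_vec[OF X P Ub] XP assoc_mult_mat_vec[OF U(1) Uh Ub] proj_U by simp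
  have P_proj: "P *\<^sub>v (U *\<^sub>v (mat_adjoint U *\<^sub>v y)) = P *\<^sub>v y" if "y \<in> carrier_vec n" for y
  proof -
    have "P * (U * mat_adjoint U) = P"
      using XP[symmetric] assoc_mult_mat[OF P X P] PX P by simp
    then show ?thesis
      using assoc_mult_mat_vec[OF P mult_carrier_mat[OF U(1) Uh] that]
        assoc_mult_mat_vec[OF U(1) Uh that] by simp
  qed
  have "(P * A * X) *\<^sub>v (P *\<^sub>v (U *\<^sub>v b)) = P *\<^sub>v (A *\<^sub>v (U *\<^sub>v b))"
    using assoc_mult_mat_vec[OF mult_carrier_mat[OF P A] X mult_mat_vec_carrier[OF P Ub]]
      assoc_mult_mat_vec[OF P A Ub] XPUb by simp
  also have "\<dots> = P *\<^sub>v (U *\<^sub>v ((mat_adjoint U * A * U) *\<^sub>v b))"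
    using P_proj[OF mult_mat_vec_carrier[OF A Ub]]
      assoc_mult_mat_vec[OF mult_carrier_mat[OF Uh A] U(1) b] assoc_mult_mat_vec[OF Uh A Ub] by simp
  also have "\<dots> = l \<cdot>\<^sub>v (P *\<^sub>v (U *\<^sub>v b))"
    unfolding eig using mult_mat_vec[OF U(1) b] mult_mat_vec[OF P Ub] by simp
  finally show "(P * A * X) *\<^sub>v (P *\<^sub>v (U *\<^sub>v b)) = l \<cdot>\<^sub>v (P *\<^sub>v (U *\<^sub>v b))" .
qed

lemma ritz_vector_eq_rescaled_inverse_vandermonde_col:
  assumes X: "X \<in> carrier_mat n m" and P: "P \<in> carrier_mat m n" and A: "A \<in> carrier_mat n n"
    and U: "U \<in> carrier_mat n m" "mat_adjoint U * U = 1\<^sub>m m"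
    and PX: "P * X = 1\<^sub>m m" and XP: "X * P = U * mat_adjoint U"
    and C: "P * A * X = companion m c"
    and eig: "\<And>i. i < m \<Longrightarrow> eigenvalue (companion m c) (lam i)" and inj: "inj_on lam {..<m}"
    and Y: "Y \<in> carrier_mat m m" "Y * vandermonde m lam = 1\<^sub>m m"
    and j: "j < m" and b: "b \<in> carrier_vec m" and eigb: "(mat_adjoint U * A * U) *\<^sub>v b = lam j \<cdot>\<^sub>v b"
  shows "U *\<^sub>v b = (vandermonde m lam *\<^sub>v (P *\<^sub>v (U *\<^sub>v b))) $ j \<cdot>\<^sub>v (X *\<^sub>v col Y j)"
proof -
  note ritz = compression_eigenvector[OF X P A U PX XP b eigb]
  have "U *\<^sub>v b = X *\<^sub>v (P *\<^sub>v (U *\<^sub>v b))" by (rule ritz(1)[symmetric])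
  also have "P *\<^sub>v (U *\<^sub>v b) = (vandermonde m lam *\<^sub>v (P *\<^sub>v (U *\<^sub>v b))) $ j \<cdot>\<^sub>v col Y j"
    using companion_eigenvector_eq_col_inverse_vandermonde[OF eig inj Y j
        mult_mat_vec_carrier[OF P mult_mat_vec_carrier[OF U(1) b]] ritz(2)[unfolded C]] .
  also have "X *\<^sub>v \<dots> = (vandermonde m lam *\<^sub>v (P *\<^sub>v (U *\<^sub>v b))) $ j \<cdot>\<^sub>v (X *\<^sub>v col Y j)"
    by (rule mult_mat_vec[OF X col_carrier_vec[OF j Y(1)]])
  finally show ?thesis .
qed

lemma pinv_rescaled_columns:
  assumes X: "X \<in> carrier_mat n m" and P: "P \<in> carrier_mat m n"
    and PX: "P * X = 1\<^sub>m m" and herm: "mat_adjoint (X * P) = X * P"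
    and V: "V \<in> carrier_mat m m" and Y: "Y \<in> carrier_mat m m"
    and VY: "V * Y = 1\<^sub>m m" and YV: "Y * V = 1\<^sub>m m"
    and \<beta>: "\<And>j. j < m \<Longrightarrow> \<beta> j \<noteq> 0"
    and Z: "Z \<in> carrier_mat n m" and Zcol: "\<And>j. j < m \<Longrightarrow> col Z j = \<beta> j \<cdot>\<^sub>v (X *\<^sub>v col Y j)"
  shows "pinv Z = mat_diag m (\<lambda>i. 1 / \<beta> i) * V * P"
proof -
  define D where "D = mat_diag m \<beta>"
  define Dinv where "Dinv = mat_diag m (\<lambda>i. 1 / \<beta> i)"
  have D: "D \<in> carrier_mat m m" and Dinv: "Dinv \<in> carrier_mat m m"
    unfolding D_def Dinv_def by simp_all
  have DDinv: "D * Dinv = 1\<^sub>m m" and DinvD: "Dinv * D = 1\<^sub>m m"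
    unfolding D_def Dinv_def mat_diag_diag using \<beta> by (auto intro!: eq_matI simp: mat_diag_def)
  have YD: "Y * D \<in> carrier_mat m m" and DinvV: "Dinv * V \<in> carrier_mat m m" using Y D Dinv V by auto
  have Z_eq: "Z = X * (Y * D)"
  proof (rule mat_col_eqI)
    fix j assume "j < dim_col (X * (Y * D))"
    then have j: "j < m" using D by simp
    have "col (Y * D) j = \<beta> j \<cdot>\<^sub>v col Y j"
      unfolding D_def mat_diag_mult_right[OF Y] using j Y by (intro eq_vecI) auto
    then show "col Z j = col (X * (Y * D)) j"
      using Zcol[OF j] col_mult2[OF X YD j] mult_mat_vec[OF X col_carrier_vec[OF j Y]] by simp
  qed (use X Y D Z in auto)
  have "Y * D * (Dinv * V) = 1\<^sub>m m"
    using assoc_mult_mat[OF Y D DinvV] assoc_mult_mat[OF D Dinv V, symmetric] DDinv V YV by simp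
  moreover have "Dinv * V * (Y * D) = 1\<^sub>m m"
    using assoc_mult_mat[OF Dinv V YD] assoc_mult_mat[OF V Y D, symmetric] VY D DinvD by simp
  ultimately have "pinv Z = Dinv * V * P"
    unfolding Z_eq by (rule pinv_mult_invertible[OF X P PX herm YD DinvV])
  then show ?thesis unfolding Dinv_def .
qed

lemma amplitude_eq_pinv_coordinate:
  assumes X: "X \<in> carrier_mat n m" and P: "P \<in> carrier_mat m n"
    and PX: "P * X = 1\<^sub>m m" and herm: "mat_adjoint (X * P) = X * P"
    and V: "V \<in> carrier_mat m m" and Y: "Y \<in> carrier_mat m m"
    and VY: "V * Y = 1\<^sub>m m" and YV: "Y * V = 1\<^sub>m m" and V0: "\<And>i. i < m \<Longrightarrow> V $$ (i, 0) = 1"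
    and Z: "Z \<in> carrier_mat n m" and Zcol: "\<And>j. j < m \<Longrightarrow> col Z j = \<beta> j \<cdot>\<^sub>v (X *\<^sub>v col Y j)"
    and Znorm: "\<And>j. j < m \<Longrightarrow> vnorm2 (col Z j) = 1"
    and j: "j < m"
  shows "vnorm2 (X *\<^sub>v col Y j) = cmod ((pinv Z *\<^sub>v col X 0) $ j)"
proof -
  have norm: "cmod (\<beta> i) * vnorm2 (X *\<^sub>v col Y i) = 1" if "i < m" for i
    using Znorm[OF that] unfolding Zcol[OF that] vnorm2_smult .
  then have \<beta>: "\<beta> i \<noteq> 0" if "i < m" for i using that by fastforce
  define Dinv where "Dinv = mat_diag m (\<lambda>i. 1 / \<beta> i)"
  have Dinv: "Dinv \<in> carrier_mat m m" unfolding Dinv_def by simp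
  have DinvV: "Dinv * V \<in> carrier_mat m m" using Dinv V by simp
  have m: "0 < m" using j by simp
  have "pinv Z = Dinv * V * P"
    unfolding Dinv_def by (rule pinv_rescaled_columns[OF X P PX herm V Y VY YV \<beta> Z Zcol])
  then have "pinv Z *\<^sub>v col X 0 = col (Dinv * V * P * X) 0"
    using col_mult2[OF mult_carrier_mat[OF DinvV P] X m] by simp
  also have "Dinv * V * P * X = Dinv * V"
    using assoc_mult_mat[OF DinvV P X] PX right_mult_one_mat[OF DinvV] by simp
  finally have "(pinv Z *\<^sub>v col X 0) $ j = 1 / \<beta> j"
    unfolding Dinv_def mat_diag_mult_left[OF V] using j V0[OF j] by simp
  moreover have "vnorm2 (X *\<^sub>v col Y j) = 1 / cmod (\<beta> j)"
    using norm[OF j] \<beta>[OF j] by (simp add: field_simps)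
  ultimately show ?thesis by (simp add: norm_divide)
qed

theorem proposition2p3:
  fixes n m :: nat
    and A :: "complex mat"
    and f :: "nat \<Rightarrow> complex vec"
    and lam :: "nat \<Rightarrow> complex"
    and U Sig Phi :: "complex mat"
    and b :: "nat \<Rightarrow> complex vec"
  defines "X \<equiv> mat_of_cols n (map f [0..<m])"
  defines "C \<equiv> companion m (pinv X *\<^sub>v f m)"
  defines "V \<equiv> vandermonde m lam"
  defines "S \<equiv> mat_adjoint U * A * U"
  defines "B \<equiv> mat_of_cols m (map b [0..<m])"
  defines "Z \<equiv> U * B"
  assumes A: "A \<in> carrier_mat n n"
    and f0: "f 0 \<in> carrier_vec n"
    and fS: "\<And>i. i < m \<Longrightarrow> f (Suc i) = A *\<^sub>v f i"
    and fullrank: "vec_space.rank n X = m"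
    and lam_eig: "\<And>i. i < m \<Longrightarrow> eigenvalue C (lam i)"
    and lam_distinct: "inj_on lam {..<m}"
    and U: "U \<in> carrier_mat n m" "mat_adjoint U * U = 1\<^sub>m m"
    and Sig: "Sig \<in> carrier_mat m m" "diagonal_mat Sig"
      "\<And>i. i < m \<Longrightarrow> \<exists>s::real. s > 0 \<and> Sig $$ (i,i) = complex_of_real s"
    and Phi: "Phi \<in> carrier_mat m m" "mat_adjoint Phi * Phi = 1\<^sub>m m"
      "Phi * mat_adjoint Phi = 1\<^sub>m m"
    and svd: "X = U * Sig * mat_adjoint Phi"
    and b: "\<And>j. j < m \<Longrightarrow> b j \<in> carrier_vec m"
      "\<And>j. j < m \<Longrightarrow> S *\<^sub>v b j = lam j \<cdot>\<^sub>v b j"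
      "\<And>j. j < m \<Longrightarrow> vnorm2 (b j) = 1"
  shows "\<forall>j<m. vnorm2 (X *\<^sub>v (mat_inv V *\<^sub>v unit_vec m j))
                 = cmod ((pinv Z *\<^sub>v col X 0) $ j)"
proof (intro allI impI)
  fix j assume j: "j < m"
  have X: "X \<in> carrier_mat n m" unfolding X_def by auto
  have Sig0: "Sig $$ (i, i) \<noteq> 0" if "i < m" for i using Sig(3)[OF that] by auto
  define P where "P = Phi * mat_diag m (\<lambda>i. 1 / Sig $$ (i, i)) * mat_adjoint U"
  note P = thin_svd_left_inverse[OF U Sig(1,2) Sig0 Phi, folded P_def svd]
  have herm: "mat_adjoint (X * P) = X * P" using P(3) hermitian_mult_mat_adjoint[OF U(1)] by simp
  have C: "P * A * X = companion m (pinv X *\<^sub>v f m)"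
    using companion_krylov[of A n f, OF A f0 fS P(1)] P(2) pinv_eq_left_inverse[OF X P(1,2) herm]
    unfolding X_def by simp
  obtain Y where Y: "Y \<in> carrier_mat m m" "V * Y = 1\<^sub>m m" "Y * V = 1\<^sub>m m"
    using vandermonde_invertible[OF lam_distinct] unfolding V_def by blast
  have Z: "Z \<in> carrier_mat n m"
    unfolding Z_def B_def
    using mult_carrier_mat[OF U(1) mat_of_cols_carrier(1)[of m "map b [0..<m]"]] by simp
  have colZ: "col Z i = U *\<^sub>v b i" if "i < m" for i
    unfolding Z_def B_def using col_mult2[of U n m _ m i] U(1) b(1) that by auto
  have Zcol: "col Z i = (V *\<^sub>v (P *\<^sub>v (U *\<^sub>v b i))) $ i \<cdot>\<^sub>v (X *\<^sub>v col Y i)" if "i < m" for i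
    unfolding colZ[OF that] V_def
    by (rule ritz_vector_eq_rescaled_inverse_vandermonde_col[OF X P(1) A U P(2,3) C
          lam_eig[unfolded C_def] lam_distinct Y(1) Y(3)[unfolded V_def] that b(1)[OF that]
          b(2)[OF that, unfolded S_def]])
  have Znorm: "vnorm2 (col Z i) = 1" if "i < m" for i
    using colZ[OF that] vnorm2_mult_isometry[OF U b(1)[OF that]] b(3)[OF that] by simp
  have "mat_inv V *\<^sub>v unit_vec m j = col Y j"
    using mat_inv_eqI[OF _ Y] mult_unit_vec_eq_col[OF Y(1) j] unfolding V_def by simp
  then show "vnorm2 (X *\<^sub>v (mat_inv V *\<^sub>v unit_vec m j)) = cmod ((pinv Z *\<^sub>v col X 0) $ j)"
    using amplitude_eq_pinv_coordinate[OF X P(1,2) herm _ Y(1-3) _ Z Zcol Znorm j]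
    unfolding V_def by (simp add: vandermonde_def)
qed

end
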